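(* Let $\mathbf D_1\in\mathcal D$. Every $\mathbf D_2\in\mathcal D$ can be written as $\mathbf D_2=\mathbf D(\mathbf D_1,\mathbf W,\mathbf v,\tau)$ with $\mathbf W\in\mathcal W_{\mathbf D_1}$, $\mathbf v\in\mathcal S^p_+$ and $\tau\ge0$ such that $\tau\|\mathbf v\|_\infty\le\pi$. Moreover, for all $j$, $$\frac2\pi\tau\mathbf v_j\le\|\mathbf d_2^j-\mathbf d_1^j\|_2=2\sin\Big(\frac{\tau\mathbf v_j}{2}\Big)\le\tau\mathbf v_j,\qquad \frac2\pi\tau\le\|\mathbf D_2-\mathbf D_1\|_F\le\tau.$$ Conversely, $\mathbf D_1=\mathbf D(\mathbf D_2,\mathbf W',\mathbf v,\tau)$ for some $\mathbf W'\in\mathcal W_{\mathbf D_2}$, with the same $\mathbf v$ and $\tau$.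
   Context: $\mathcal D$: real $m\times p$ matrices with unit $\ell_2$-norm columns; $\mathbf d^j$ denotes the $j$-th column. $\mathcal S^p_+=\{\mathbf v\in\mathbb R^p_+:\|\mathbf v\|_2=1\}$. For $\mathbf D\in\mathcal D$, $\mathcal W_{\mathbf D}=\{\mathbf W\in\mathbb R^{m\times p}:\mathrm{diag}(\mathbf W^\top\mathbf D)=\mathbf 0,\mathrm{diag}(\mathbf W^\top\mathbf W)=\mathbf 1\}$, and $\mathbf D(\mathbf D,\mathbf W,\mathbf v,t)=\mathbf D\,\mathrm{Diag}[\cos(\mathbf vt)]+\mathbf W\,\mathrm{Diag}[\sin(\mathbf vt)]$ (cos, sin entrywise). *)

theory Defs
  imports "HOL-Analysis.Analysis"
begin

text \<open>m x p real matrices are represented as real^'p^'m (rows indexed by 'm, columns by 'p). The Frobenius norm of a matrix is the library norm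
  on real^'p^'m (the L2 norm of the nested vector).\<close>

definition dict_set :: "(real^'p^'m) set" where
  "dict_set = {D. \<forall>j. norm (column j D) = 1}"

definition Sp_plus :: "(real^'p) set" where
  "Sp_plus = {v. (\<forall>j. 0 \<le> v $ j) \<and> norm v = 1}"

definition Diag :: "real^'p \<Rightarrow> real^'p^'p" where
  "Diag v = (\<chi> i j. if i = j then v $ i else 0)"

definition W_set :: "real^'p^'m \<Rightarrow> (real^'p^'m) set" where
  "W_set D = {W. (\<forall>j. (transpose W ** D) $ j $ j = 0) \<and> (\<forall>j. (transpose W ** W) $ j $ j = 1)}"

definition geod :: "real^'p^'m \<Rightarrow> real^'p^'m \<Rightarrow> real^'p \<Rightarrow> real \<Rightarrow> real^'p^'m" where
  "geod D W v t = D ** Diag (\<chi> j. cos (v $ j * t)) + W ** Diag (\<chi> j. sin (v $ j * t))"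

end

theory Submission
  imports Defs
begin

text \<open>Every column is a point of the unit sphere, and \<open>d\<^sub>2\<^sup>j\<close> lies on a great circle through
  \<open>d\<^sub>1\<^sup>j\<close>: \<open>d\<^sub>2\<^sup>j = cos \<theta>\<^sub>j d\<^sub>1\<^sup>j + sin \<theta>\<^sub>j w\<^sub>j\<close> with \<open>w\<^sub>j\<close> a unit vector orthogonal to \<open>d\<^sub>1\<^sup>j\<close> and
  \<open>\<theta>\<^sub>j \<in> [0, \<pi>]\<close> the angle between the two columns (if \<open>d\<^sub>2\<^sup>j = \<plusminus>d\<^sub>1\<^sup>j\<close>, any unit \<open>w\<^sub>j \<bottom> d\<^sub>1\<^sup>j\<close>
  will do; one exists because \<open>m \<ge> 2\<close>). Writing the angle vector \<open>\<theta>\<close> as \<open>\<tau> v\<close> with \<open>\<tau> = \<parallel>\<theta>\<parallel>\<close>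
  gives the representation. The chord \<open>\<parallel>d\<^sub>2\<^sup>j - d\<^sub>1\<^sup>j\<parallel> = 2 sin (\<theta>\<^sub>j/2)\<close> lies between
  \<open>2\<theta>\<^sub>j/\<pi>\<close> (Jordan's inequality) and \<open>\<theta>\<^sub>j\<close>; the Frobenius norm is the Euclidean norm of the
  vector of column norms, so the bounds for \<open>\<parallel>D\<^sub>2 - D\<^sub>1\<parallel>\<close> follow componentwise. The great circle
  traversed backwards from \<open>d\<^sub>2\<^sup>j\<close> has direction \<open>sin \<theta>\<^sub>j d\<^sub>1\<^sup>j - cos \<theta>\<^sub>j w\<^sub>j\<close>, which gives the
  converse.\<close>

lemma jordan_inequality:
  fixes y :: real
  assumes "0 \<le> y" "y \<le> pi / 2"
  shows "2 / pi * y \<le> sin y"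
proof -
  let ?h = "\<lambda>y. 2 / pi * y - sin y"
  have convex: "convex_on {0..pi/2} ?h"
  proof (rule f''_ge0_imp_convex[where f' = "\<lambda>y. 2 / pi - cos y" and f'' = sin])
    fix x assume "x \<in> {0..pi/2}"
    then show "0 \<le> sin x" by (intro sin_ge_zero) auto
  qed (auto intro!: derivative_eq_intros)
  define t where "t = y / (pi / 2)"
  have t: "0 \<le> t" "t \<le> 1" "y = (1 - t) *\<^sub>R 0 + t *\<^sub>R (pi / 2)"
    using assms unfolding t_def by (auto simp: field_simps)
  \<comment> \<open>a convex function lies below its chord, and \<open>?h\<close> vanishes at both ends of \<open>[0, \<pi>/2]\<close>\<close>
  have "?h y \<le> (1 - t) * ?h 0 + t * ?h (pi / 2)"
    unfolding t(3) by (rule convex_onD[OF convex]) (use t in auto)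
  then show ?thesis by simp
qed

lemma two_sin_half_bounds:
  fixes \<theta> :: real
  assumes "0 \<le> \<theta>" "\<theta> \<le> pi"
  shows "0 \<le> 2 * sin (\<theta> / 2)" "2 / pi * \<theta> \<le> 2 * sin (\<theta> / 2)" "2 * sin (\<theta> / 2) \<le> \<theta>"
  using assms sin_ge_zero[of "\<theta> / 2"] jordan_inequality[of "\<theta> / 2"] sin_x_le_x[of "\<theta> / 2"]
  by auto

lemma great_circle_through:
  fixes a b :: "'a::euclidean_space"
  assumes "norm a = 1" "norm b = 1" "2 \<le> DIM('a)"
  obtains w \<theta> where "norm w = 1" "w \<bullet> a = 0" "0 \<le> \<theta>" "\<theta> \<le> pi"
    "b = cos \<theta> *\<^sub>R a + sin \<theta> *\<^sub>R w"
proof -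
  define c where "c = a \<bullet> b"
  define r where "r = b - c *\<^sub>R a"
  have aa: "a \<bullet> a = 1" and bb: "b \<bullet> b = 1"
    using assms by (simp_all add: power2_norm_eq_inner[symmetric])
  have c: "\<bar>c\<bar> \<le> 1"
    using Cauchy_Schwarz_ineq2[of a b] assms unfolding c_def by simp
  have ra: "r \<bullet> a = 0"
    unfolding r_def c_def using aa by (simp add: inner_diff_left inner_diff_right inner_commute)
  have "norm r ^ 2 = 1 - c ^ 2"
    unfolding power2_norm_eq_inner r_def c_def using aa bb
    by (simp add: inner_diff_left inner_diff_right inner_commute power2_eq_square)
  then have sin_arccos_c: "sin (arccos c) = norm r"
    using c by (simp add: sin_arccos real_sqrt_unique)
  obtain u where u: "norm u = 1" "u \<bullet> a = 0"
  proof -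
    obtain y where "y \<noteq> 0" "orthogonal a y"
      using orthogonal_to_vector_exists assms(3) by blast
    then show thesis
      by (intro that[of "y /\<^sub>R norm y"]) (auto simp: orthogonal_def inner_commute)
  qed
  define w where "w = (if r = 0 then u else r /\<^sub>R norm r)"
  show thesis
  proof (rule that[of w "arccos c"])
    show "norm w = 1" "w \<bullet> a = 0" using u ra unfolding w_def by auto
    show "0 \<le> arccos c" "arccos c \<le> pi" using c by (auto intro: arccos_lbound arccos_ubound)
    have "b = c *\<^sub>R a + norm r *\<^sub>R w" unfolding r_def w_def by auto
    then show "b = cos (arccos c) *\<^sub>R a + sin (arccos c) *\<^sub>R w"
      using c sin_arccos_c by simp
  qed
qed

lemma great_circle_chord:
  fixes a w :: "'a::real_inner" and \<theta> :: real
  assumes "norm a = 1" "norm w = 1" "w \<bullet> a = 0" "0 \<le> \<theta>" "\<theta> \<le> pi"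
  shows "norm (cos \<theta> *\<^sub>R a + sin \<theta> *\<^sub>R w - a) = 2 * sin (\<theta> / 2)"
proof (rule power2_eq_imp_eq)
  have aa: "a \<bullet> a = 1" and ww: "w \<bullet> w = 1"
    using assms by (simp_all add: power2_norm_eq_inner[symmetric])
  have "norm (cos \<theta> *\<^sub>R a + sin \<theta> *\<^sub>R w - a) ^ 2 = (cos \<theta> - 1) ^ 2 + (sin \<theta>) ^ 2"
    unfolding power2_norm_eq_inner using aa ww assms(3)
    by (simp add: inner_commute algebra_simps power2_eq_square)
  also have "\<dots> = 2 - 2 * cos (2 * (\<theta> / 2))"
    by (simp add: power2_diff sin_squared_eq)
  also have "\<dots> = (2 * sin (\<theta> / 2)) ^ 2"
    by (simp only: cos_double_sin) (simp add: power_mult_distrib)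
  finally show "norm (cos \<theta> *\<^sub>R a + sin \<theta> *\<^sub>R w - a) ^ 2 = (2 * sin (\<theta> / 2)) ^ 2" .
  show "0 \<le> 2 * sin (\<theta> / 2)" using two_sin_half_bounds assms(4,5) by blast
qed simp

lemma great_circle_reverse:
  fixes a w :: "'a::real_inner" and \<theta> :: real
  assumes "norm a = 1" "norm w = 1" "w \<bullet> a = 0"
  defines "b \<equiv> cos \<theta> *\<^sub>R a + sin \<theta> *\<^sub>R w"
    and "w' \<equiv> sin \<theta> *\<^sub>R a - cos \<theta> *\<^sub>R w"
  shows "norm w' = 1" "w' \<bullet> b = 0" "a = cos \<theta> *\<^sub>R b + sin \<theta> *\<^sub>R w'"
proof -
  have aa: "a \<bullet> a = 1" and ww: "w \<bullet> w = 1" and aw: "a \<bullet> w = 0"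
    using assms by (simp_all add: power2_norm_eq_inner[symmetric] inner_commute)
  have "w' \<bullet> w' = (sin \<theta>)\<^sup>2 + (cos \<theta>)\<^sup>2"
    unfolding w'_def using aa ww aw
    by (simp add: inner_commute algebra_simps power2_eq_square)
  then show "norm w' = 1" by (simp add: norm_eq_sqrt_inner)
  show "w' \<bullet> b = 0"
    unfolding w'_def b_def using aa ww aw
    by (simp add: inner_commute algebra_simps)
  have "cos \<theta> *\<^sub>R b + sin \<theta> *\<^sub>R w' = (cos \<theta> * cos \<theta>) *\<^sub>R a + (sin \<theta> * sin \<theta>) *\<^sub>R a"
    unfolding b_def w'_def by (simp add: algebra_simps)
  also have "\<dots> = a" by (simp flip: scaleR_add_left)
  finally show "a = cos \<theta> *\<^sub>R b + sin \<theta> *\<^sub>R w'" ..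
qed

lemma infnorm_le_cart:
  fixes x :: "real^'n"
  assumes "\<And>j. \<bar>x $ j\<bar> \<le> c"
  shows "infnorm x \<le> c"
  unfolding infnorm_cart by (rule cSup_least) (use assms in auto)

lemma Sp_plus_polar:
  fixes x :: "real^'p"
  assumes "\<And>j. 0 \<le> x $ j"
  obtains v where "v \<in> Sp_plus" "x = norm x *\<^sub>R v"
proof (cases "x = 0")
  case True
  have "0 \<le> axis undefined (1::real) $ j" for j :: 'p
    by (simp add: axis_def)
  then show thesis
    using that[of "axis undefined 1"] True by (simp add: Sp_plus_def)
next
  case False
  show thesis
    by (rule that[of "x /\<^sub>R norm x"]) (use False assms in \<open>auto simp: Sp_plus_def\<close>)
qed

definition of_columns :: "('n \<Rightarrow> 'a^'m) \<Rightarrow> 'a^'n^'m" where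
  "of_columns f = (\<chi> i j. f j $ i)"

lemma column_of_columns [simp]: "column j (of_columns f) = f j"
  by (simp add: of_columns_def column_def vec_eq_iff)

lemma matrix_eq_iff_columns: "A = B \<longleftrightarrow> (\<forall>j. column j A = column j B)"
  by (auto simp: vec_eq_iff column_def)

lemma column_add [simp]: "column j (A + B) = column j A + column j B"
  by (simp add: column_def vec_eq_iff)

lemma column_diff [simp]: "column j (A - B) = column j A - column j B"
  by (simp add: column_def vec_eq_iff)

lemma column_mult_Diag: "column j (A ** Diag c) = c $ j *\<^sub>R column j A"
  by (simp add: column_def vec_eq_iff matrix_matrix_mult_def Diag_def if_distrib[of "(*) _"]
      cong: if_cong)

lemma column_geod:
  "column j (geod D W v t) = cos (v $ j * t) *\<^sub>R column j D + sin (v $ j * t) *\<^sub>R column j W"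
  by (simp add: geod_def column_mult_Diag)

lemma geod_scaleR: "geod D W (t *\<^sub>R v) 1 = geod D W v t"
  by (simp add: geod_def mult.commute)

lemma dict_set_iff_columns: "D \<in> dict_set \<longleftrightarrow> (\<forall>j. norm (column j D) = 1)"
  by (simp add: dict_set_def)

lemma W_set_iff_columns:
  "W \<in> W_set D \<longleftrightarrow> (\<forall>j. column j W \<bullet> column j D = 0 \<and> norm (column j W) = 1)"
proof -
  have "(transpose W ** B) $ j $ j = column j W \<bullet> column j B" for B j
    by (simp add: matrix_matrix_mult_def transpose_def column_def inner_vec_def)
  then show ?thesis by (simp add: W_set_def norm_eq_1 all_conj_distrib)
qed

lemma norm_matrix_eq_norm_column_norms:
  fixes M :: "real^'n^'m"
  shows "norm M = norm (\<chi> j. norm (column j M))"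
proof -
  have "norm M = sqrt (\<Sum>i\<in>UNIV. \<Sum>j\<in>UNIV. (M $ i $ j)\<^sup>2)"
    by (simp add: norm_vec_def L2_set_def sum_nonneg)
  also have "\<dots> = sqrt (\<Sum>j\<in>UNIV. \<Sum>i\<in>UNIV. (M $ i $ j)\<^sup>2)"
    by (subst sum.swap) (rule refl)
  also have "\<dots> = norm (\<chi> j. norm (column j M))"
    by (simp add: norm_vec_def L2_set_def column_def sum_nonneg)
  finally show ?thesis .
qed

lemma geod_through:
  fixes D1 D2 :: "real^'p^'m"
  assumes "CARD('m) \<ge> 2" "D1 \<in> dict_set" "D2 \<in> dict_set"
  obtains W \<theta> where "W \<in> W_set D1" "\<And>j. 0 \<le> \<theta> $ j \<and> \<theta> $ j \<le> pi" "D2 = geod D1 W \<theta> 1"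
proof -
  have "\<exists>w \<theta>. norm w = 1 \<and> w \<bullet> column j D1 = 0 \<and> 0 \<le> \<theta> \<and> \<theta> \<le> pi
      \<and> column j D2 = cos \<theta> *\<^sub>R column j D1 + sin \<theta> *\<^sub>R w" for j
    using great_circle_through[of "column j D1" "column j D2"] assms
    by (metis dict_set_iff_columns DIM_cart DIM_real mult_1_right)
  then obtain w \<theta> where circle: "\<And>j. norm (w j) = 1" "\<And>j. w j \<bullet> column j D1 = 0"
      "\<And>j. 0 \<le> \<theta> j \<and> \<theta> j \<le> pi"
      "\<And>j. column j D2 = cos (\<theta> j) *\<^sub>R column j D1 + sin (\<theta> j) *\<^sub>R w j"
    by metis
  show thesis
  proof (rule that[of "of_columns w" "\<chi> j. \<theta> j"])
    show "of_columns w \<in> W_set D1" using circle by (simp add: W_set_iff_columns)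
  qed (simp_all add: circle matrix_eq_iff_columns column_geod)
qed

lemma geod_reverse:
  fixes D W :: "real^'p^'m"
  assumes "D \<in> dict_set" "W \<in> W_set D"
  obtains W' where "W' \<in> W_set (geod D W v t)" "D = geod (geod D W v t) W' v t"
proof -
  define W' where
    "W' = of_columns (\<lambda>j. sin (v $ j * t) *\<^sub>R column j D - cos (v $ j * t) *\<^sub>R column j W)"
  have unit: "norm (column j D) = 1" "norm (column j W) = 1" "column j W \<bullet> column j D = 0" for j
    using assms by (simp_all add: dict_set_iff_columns W_set_iff_columns)
  have reverse: "norm (column j W') = 1" "column j W' \<bullet> column j (geod D W v t) = 0"
    "column j D = cos (v $ j * t) *\<^sub>R column j (geod D W v t) + sin (v $ j * t) *\<^sub>R column j W'"
    for j
    unfolding W'_def column_of_columns column_geod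
    using great_circle_reverse[OF unit(1-3)[of j], where \<theta> = "v $ j * t"] by blast+
  show thesis
  proof (rule that[of W'])
    show "W' \<in> W_set (geod D W v t)"
      unfolding W_set_iff_columns using reverse(1,2) by blast
    show "D = geod (geod D W v t) W' v t"
      unfolding matrix_eq_iff_columns column_geod[of _ "geod D W v t"] using reverse(3) by blast
  qed
qed

lemma norm_column_geod_diff:
  fixes D W :: "real^'p^'m"
  assumes "D \<in> dict_set" "W \<in> W_set D" "0 \<le> v $ j * t" "v $ j * t \<le> pi"
  shows "norm (column j (geod D W v t) - column j D) = 2 * sin (v $ j * t / 2)"
  using assms great_circle_chord[of "column j D" "column j W" "v $ j * t"]
  by (simp add: column_geod dict_set_iff_columns W_set_iff_columns)

lemma norm_geod_diff_bounds:
  fixes D W :: "real^'p^'m"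
  assumes "D \<in> dict_set" "W \<in> W_set D" "\<And>j. 0 \<le> v $ j * t \<and> v $ j * t \<le> pi"
  shows "2 / pi * norm (t *\<^sub>R v) \<le> norm (geod D W v t - D)"
    and "norm (geod D W v t - D) \<le> norm (t *\<^sub>R v)"
proof -
  have chord: "norm (geod D W v t - D) = norm (\<chi> j. 2 * sin (v $ j * t / 2))"
    using norm_column_geod_diff[OF assms(1,2)] assms(3)
    by (simp add: norm_matrix_eq_norm_column_norms)
  have bounds: "0 \<le> 2 * sin (v $ j * t / 2)" "2 / pi * (v $ j * t) \<le> 2 * sin (v $ j * t / 2)"
    "2 * sin (v $ j * t / 2) \<le> v $ j * t" for j
    using two_sin_half_bounds assms(3) by blast+
  have angle: "norm ((t *\<^sub>R v) $ j) = v $ j * t" for j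
    using assms(3)[of j] by (simp add: mult.commute)
  have "norm ((2 / pi) *\<^sub>R (t *\<^sub>R v)) \<le> norm (\<chi> j. 2 * sin (v $ j * t / 2))"
  proof (rule norm_le_componentwise_cart)
    fix j
    have "norm (((2 / pi) *\<^sub>R (t *\<^sub>R v)) $ j) = 2 / pi * norm ((t *\<^sub>R v) $ j)"
      by (simp only: vector_scaleR_component norm_scaleR) simp
    also have "\<dots> \<le> norm ((\<chi> j. 2 * sin (v $ j * t / 2)) $ j)"
      using angle bounds(1,2) by simp
    finally show "norm (((2 / pi) *\<^sub>R (t *\<^sub>R v)) $ j) \<le> norm ((\<chi> j. 2 * sin (v $ j * t / 2)) $ j)" .
  qed
  then show "2 / pi * norm (t *\<^sub>R v) \<le> norm (geod D W v t - D)"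
    by (simp add: chord)
  have "norm (\<chi> j. 2 * sin (v $ j * t / 2)) \<le> norm (t *\<^sub>R v)"
  proof (rule norm_le_componentwise_cart)
    fix j
    have "norm ((\<chi> j. 2 * sin (v $ j * t / 2)) $ j) \<le> v $ j * t"
      using bounds(1,3) by simp
    then show "norm ((\<chi> j. 2 * sin (v $ j * t / 2)) $ j) \<le> norm ((t *\<^sub>R v) $ j)"
      by (simp only: angle)
  qed
  then show "norm (geod D W v t - D) \<le> norm (t *\<^sub>R v)"
    by (simp add: chord)
qed

theorem lemma1:
  fixes D1 D2 :: "real^'p^'m"
  assumes m2: "CARD('m) \<ge> 2"
    and D1: "D1 \<in> dict_set" and D2: "D2 \<in> dict_set"
  shows "\<exists>W v \<tau>. W \<in> W_set D1 \<and> v \<in> Sp_plus \<and> \<tau> \<ge> 0 \<and> \<tau> * infnorm v \<le> pi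
           \<and> D2 = geod D1 W v \<tau>
           \<and> (\<forall>j. 2 / pi * \<tau> * v $ j \<le> norm (column j D2 - column j D1)
                 \<and> norm (column j D2 - column j D1) = 2 * sin (\<tau> * v $ j / 2)
                 \<and> 2 * sin (\<tau> * v $ j / 2) \<le> \<tau> * v $ j)
           \<and> 2 / pi * \<tau> \<le> norm (D2 - D1) \<and> norm (D2 - D1) \<le> \<tau>
           \<and> (\<exists>W'. W' \<in> W_set D2 \<and> D1 = geod D2 W' v \<tau>)"
proof -
  obtain W \<theta> where W: "W \<in> W_set D1" and angles: "\<And>j. 0 \<le> \<theta> $ j \<and> \<theta> $ j \<le> pi"
    and D2_geod: "D2 = geod D1 W \<theta> 1"
    using geod_through[OF m2 D1 D2] by blast
  define \<tau> where "\<tau> = norm \<theta>"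
  obtain v where v: "v \<in> Sp_plus" and polar: "\<theta> = \<tau> *\<^sub>R v"
    using Sp_plus_polar angles unfolding \<tau>_def by blast
  have D2_eq: "D2 = geod D1 W v \<tau>"
    using D2_geod by (simp add: polar geod_scaleR)
  have angle_bounds: "0 \<le> v $ j * \<tau> \<and> v $ j * \<tau> \<le> pi" for j
    using angles[of j] polar by (simp add: mult.commute)
  have "\<tau> * infnorm v = infnorm \<theta>"
    unfolding polar by (simp add: infnorm_mul \<tau>_def)
  also have "\<dots> \<le> pi"
    by (rule infnorm_le_cart) (use angles in auto)
  finally have infnorm_bound: "\<tau> * infnorm v \<le> pi" .
  have norm_polar: "norm (\<tau> *\<^sub>R v) = \<tau>"
    using v by (simp add: Sp_plus_def \<tau>_def)
  have columns: "2 / pi * \<tau> * v $ j \<le> norm (column j D2 - column j D1)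
      \<and> norm (column j D2 - column j D1) = 2 * sin (\<tau> * v $ j / 2)
      \<and> 2 * sin (\<tau> * v $ j / 2) \<le> \<tau> * v $ j" for j
    using norm_column_geod_diff[OF D1 W angle_bounds[THEN conjunct1] angle_bounds[THEN conjunct2]]
      two_sin_half_bounds[of "\<tau> * v $ j"] angle_bounds[of j]
    by (simp add: D2_eq mult.commute mult.left_commute)
  obtain W' where "W' \<in> W_set D2" "D1 = geod D2 W' v \<tau>"
    using geod_reverse[OF D1 W, of v \<tau>] unfolding D2_eq[symmetric] by blast
  moreover have "2 / pi * \<tau> \<le> norm (D2 - D1)" "norm (D2 - D1) \<le> \<tau>"
    using norm_geod_diff_bounds[OF D1 W angle_bounds] norm_polar by (simp_all add: D2_eq)
  moreover have "0 \<le> \<tau>"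
    by (simp add: \<tau>_def)
  ultimately show ?thesis
    using W v infnorm_bound D2_eq columns by blast
qed

end
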